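(* If $R^*$ denotes the Reeb vector field of $M^*$, then $R^*\circ R=-\mathrm{id}_M$. In particular, $(M^* )^*=-M$.
   Context: Let $(W,\omega)$ be a symplectic vector space and let $M\subset W$ be a smooth hypersurface bounding a quadratically convex domain that contains the origin in its interior. For every $x\in M$ let $R(x)\in W$ be the unique vector with $\omega(v,R(x))=0$ for all $v\in T_xM$ and $\omega(x,R(x))=1$; that is, $R$ is the Reeb vector field of the contact form $\omega(x,\cdot)|_{T_xM}$ on $M$. The image $M^*=\{R(x): x\in M\}\subset W$ is the symplectic polar of $M$. $R^*$ denotes the analogous map for $M^*$: for $a\in M^*$, $R^*(a)$ is the unique vector with $\omega(u,R^*(a))=0$ for all $u\in T_aM^*$ and $\omega(a,R^*(a))=1$. *)

theory Defs
  imports "HOL-Analysis.Analysis"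
begin

definition symplectic_form :: "('a::euclidean_space \<Rightarrow> 'a \<Rightarrow> real) \<Rightarrow> bool" where
  "symplectic_form \<omega> \<longleftrightarrow> bilinear \<omega> \<and> (\<forall>u v. \<omega> u v = - \<omega> v u)
     \<and> (\<forall>u. (\<forall>v. \<omega> u v = 0) \<longrightarrow> u = 0)"

text \<open>Smooth (C-infinity) real function: D [] = f and every iterated directional
  derivative D vs is Frechet differentiable everywhere, with derivative
  v \<mapsto> D (v # vs).\<close>
definition smooth_derivs :: "('a::euclidean_space \<Rightarrow> real) \<Rightarrow> ('a list \<Rightarrow> 'a \<Rightarrow> real) \<Rightarrow> bool" where
  "smooth_derivs f D \<longleftrightarrow> D [] = f \<and>
     (\<forall>vs x. (D vs has_derivative (\<lambda>v. D (v # vs) x)) (at x))"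

text \<open>M is a smooth hypersurface bounding a quadratically convex domain containing the
  origin in its interior: M is the regular zero set of a smooth defining function rho,
  the domain is {rho \<le> 0} (bounded and convex, with 0 in its interior), and the
  Hessian of rho is positive definite on each tangent hyperplane ker d rho(x)
  (positive definite second fundamental form).\<close>
definition qconvex_hypersurface :: "'a::euclidean_space set \<Rightarrow> bool" where
  "qconvex_hypersurface M \<longleftrightarrow> (\<exists>\<rho> D. smooth_derivs \<rho> D \<and>
     M = {x. \<rho> x = 0} \<and>
     (\<forall>x\<in>M. \<exists>v. D [v] x \<noteq> 0) \<and>
     (\<forall>x\<in>M. \<forall>v. v \<noteq> 0 \<and> D [v] x = 0 \<longrightarrow> D [v, v] x > 0) \<and>
     bounded {x. \<rho> x \<le> 0} \<and> convex {x. \<rho> x \<le> 0} \<and>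
     0 \<in> interior {x. \<rho> x \<le> 0})"

definition tangent_space :: "'a::euclidean_space set \<Rightarrow> 'a \<Rightarrow> 'a set" where
  "tangent_space S x = {v. \<exists>\<gamma>. \<gamma> 0 = x \<and> (\<forall>\<^sub>F t in nhds 0. \<gamma> t \<in> S)
      \<and> (\<gamma> has_vector_derivative v) (at 0)}"

text \<open>Reeb vector of the contact form omega(x,.) restricted to T_x S.\<close>
definition reeb :: "('a::euclidean_space \<Rightarrow> 'a \<Rightarrow> real) \<Rightarrow> 'a set \<Rightarrow> 'a \<Rightarrow> 'a" where
  "reeb \<omega> S x = (THE r. (\<forall>v\<in>tangent_space S x. \<omega> v r = 0) \<and> \<omega> x r = 1)"

definition symplectic_polar :: "('a::euclidean_space \<Rightarrow> 'a \<Rightarrow> real) \<Rightarrow> 'a set \<Rightarrow> 'a set" where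
  "symplectic_polar \<omega> S = reeb \<omega> S ` S"

end

theory Submission
  imports Defs
begin

(* Write M as the zero set of a defining function \<rho> with derivative d\<rho> and let J be the linear map
   with \<omega> v (J g) = v \<bullet> g. The Reeb vector of M at y is R y = J (grad \<rho> y) / d\<rho> y y, so that
   \<omega> v (R y) = d\<rho> y v / d\<rho> y y. Convexity gives d\<rho> y x \<le> d\<rho> y y for x, y \<in> M, so the linear
   form \<omega> x attains its maximum 1 on the polar R ` M at R x, and the tangent space of the polar
   at R x lies in ker (\<omega> x). Quadratic convexity makes the derivative of R injective on the
   tangent space of M at x, so by counting dimensions the two hyperplanes coincide. Hence -x is
   \<omega>-orthogonal to the tangent space of the polar at R x, and \<omega> (R x) (-x) = \<omega> x (R x) = 1. *)

definition riesz_vector :: "('a::euclidean_space \<Rightarrow> real) \<Rightarrow> 'a" where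
  "riesz_vector f = (\<Sum>b\<in>Basis. f b *\<^sub>R b)"

lemma inner_riesz_vector:
  assumes "linear f"
  shows "v \<bullet> riesz_vector f = f v"
proof -
  have "f v = f (\<Sum>b\<in>Basis. (v \<bullet> b) *\<^sub>R b)"
    by (simp add: euclidean_representation)
  also have "\<dots> = (\<Sum>b\<in>Basis. (v \<bullet> b) * f b)"
    by (simp add: linear_sum[OF assms] linear_scale[OF assms])
  finally show ?thesis
    by (simp add: riesz_vector_def inner_sum_right mult.commute)
qed

lemma riesz_vector_neq_0:
  assumes "linear f" "f p \<noteq> 0"
  shows "riesz_vector f \<noteq> 0"
  using inner_riesz_vector[OF assms(1), of p] assms(2) by auto

lemma dim_kernel_functional:
  fixes f :: "'a::euclidean_space \<Rightarrow> real"
  assumes "linear f" "f p \<noteq> 0"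
  shows "dim {v. f v = 0} = DIM('a) - 1"
proof -
  have "{v. f v = 0} = {v. riesz_vector f \<bullet> v = 0}"
    by (simp add: inner_commute inner_riesz_vector[OF assms(1)])
  then show ?thesis
    using dim_hyperplane[OF riesz_vector_neq_0[OF assms]] by simp
qed

lemma symplectic_form_bilinear: "symplectic_form \<omega> \<Longrightarrow> bilinear \<omega>"
  unfolding symplectic_form_def by blast

lemma symplectic_form_antisym: "symplectic_form \<omega> \<Longrightarrow> \<omega> u v = - \<omega> v u"
  unfolding symplectic_form_def by blast

lemma symplectic_form_eq_0_right:
  assumes "symplectic_form \<omega>" "\<And>v. \<omega> v r = 0"
  shows "r = 0"
  using assms unfolding symplectic_form_def by metis

lemma symplectic_form_dual_map:
  assumes "symplectic_form \<omega>"
  obtains J where "linear J" "\<And>v g. \<omega> v (J g) = v \<bullet> g"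
proof -
  have lin: "linear (\<lambda>v. \<omega> v r)" "linear (\<omega> v)" for v r
    using symplectic_form_bilinear[OF assms] unfolding bilinear_def by blast+
  define \<Phi> where "\<Phi> r = riesz_vector (\<lambda>v. \<omega> v r)" for r
  have inner_\<Phi>: "v \<bullet> \<Phi> r = \<omega> v r" for v r
    unfolding \<Phi>_def by (rule inner_riesz_vector[OF lin(1)])
  have "linear \<Phi>"
    unfolding \<Phi>_def riesz_vector_def
    by (intro linearI) (simp_all add: linear_add[OF lin(2)] linear_scale[OF lin(2)]
        scaleR_add_left sum.distrib scaleR_sum_right)
  moreover have "inj \<Phi>"
    unfolding linear_inj_iff_eq_0[OF \<open>linear \<Phi>\<close>]
    by (metis inner_\<Phi> inner_zero_right symplectic_form_eq_0_right[OF assms])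
  ultimately obtain J where J: "linear J" "\<Phi> \<circ> J = id"
    using linear_surjective_right_inverse linear_inj_imp_surj by metis
  have "\<omega> v (J g) = v \<bullet> g" for v g
    using inner_\<Phi>[of v "J g"] J(2) by (simp add: pointfree_idE)
  with J(1) show thesis by (rule that)
qed

lemma reeb_eqI:
  fixes \<phi> :: "'a::euclidean_space \<Rightarrow> real"
  assumes symp: "symplectic_form \<omega>" and "linear \<phi>" "\<phi> p \<noteq> 0"
    and kernel: "{v. \<phi> v = 0} \<subseteq> tangent_space S p"
    and r: "\<And>v. v \<in> tangent_space S p \<Longrightarrow> \<omega> v r = 0" "\<omega> p r = 1"
  shows "reeb \<omega> S p = r"
  unfolding reeb_def
proof (rule the_equality)
  show "(\<forall>v\<in>tangent_space S p. \<omega> v r = 0) \<and> \<omega> p r = 1"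
    using r by blast
  fix r' assume r': "(\<forall>v\<in>tangent_space S p. \<omega> v r' = 0) \<and> \<omega> p r' = 1"
  have bil: "bilinear \<omega>" by (rule symplectic_form_bilinear[OF symp])
  have "\<omega> v (r' - r) = 0" for v
  proof -
    define k where "k = \<phi> v / \<phi> p"
    have "\<phi> (v - k *\<^sub>R p) = 0"
      using \<open>\<phi> p \<noteq> 0\<close> by (simp add: k_def linear_diff[OF \<open>linear \<phi>\<close>] linear_scale[OF \<open>linear \<phi>\<close>])
    then have "v - k *\<^sub>R p \<in> tangent_space S p"
      using kernel by blast
    then have "\<omega> (v - k *\<^sub>R p) (r' - r) = 0"
      using r r' by (simp add: bilinear_rsub[OF bil])
    moreover have "\<omega> p (r' - r) = 0"
      using r r' by (simp add: bilinear_rsub[OF bil])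
    ultimately show ?thesis
      by (simp add: bilinear_lsub[OF bil] bilinear_lmul[OF bil])
  qed
  then show "r' = r"
    using symplectic_form_eq_0_right[OF symp] by fastforce
qed

lemma tangent_space_image:
  assumes "(f has_derivative f') (at x)" "v \<in> tangent_space S x"
  shows "f' v \<in> tangent_space (f ` S) (f x)"
proof -
  obtain \<gamma> where \<gamma>: "\<gamma> 0 = x" "\<forall>\<^sub>F t in nhds 0. \<gamma> t \<in> S" "(\<gamma> has_vector_derivative v) (at 0)"
    using assms(2) unfolding tangent_space_def by blast
  have "(f \<circ> \<gamma> has_vector_derivative f' v) (at 0)"
    using vector_derivative_diff_chain_within[of \<gamma> v 0 UNIV f f'] \<gamma>(1,3) has_derivative_at_withinI[OF assms(1)] by simp
  moreover have "\<forall>\<^sub>F t in nhds 0. (f \<circ> \<gamma>) t \<in> f ` S"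
    using \<gamma>(2) by eventually_elim simp
  ultimately show ?thesis
    unfolding tangent_space_def mem_Collect_eq using \<gamma>(1) by (intro exI[of _ "f \<circ> \<gamma>"]) simp
qed

lemma tangent_space_derivative_eq_0_at_max:
  fixes f :: "'a::euclidean_space \<Rightarrow> real"
  assumes "(f has_derivative f') (at x)" "\<And>y. y \<in> S \<Longrightarrow> f y \<le> f x" "v \<in> tangent_space S x"
  shows "f' v = 0"
proof -
  obtain \<gamma> where \<gamma>: "\<gamma> 0 = x" "\<forall>\<^sub>F t in nhds 0. \<gamma> t \<in> S" "(\<gamma> has_vector_derivative v) (at 0)"
    using assms(3) unfolding tangent_space_def by blast
  have "(f \<circ> \<gamma> has_vector_derivative f' v) (at 0)"
    using vector_derivative_diff_chain_within[of \<gamma> v 0 UNIV f f'] \<gamma>(1,3) has_derivative_at_withinI[OF assms(1)] by simp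
  then have deriv: "(f \<circ> \<gamma> has_real_derivative f' v) (at 0)"
    by (simp add: has_real_derivative_iff_has_vector_derivative)
  obtain d where "d > 0" "\<forall>t. dist t 0 < d \<longrightarrow> \<gamma> t \<in> S"
    using \<gamma>(2) unfolding eventually_nhds_metric by blast
  then show ?thesis
    using assms(2) \<gamma>(1) by (intro DERIV_local_max[OF deriv \<open>d > 0\<close>]) (auto simp: dist_real_def)
qed

lemma has_real_derivative_0_if_little_o:
  fixes f :: "real \<Rightarrow> real"
  assumes "f 0 = 0" and small: "\<And>\<epsilon>. \<epsilon> > 0 \<Longrightarrow> \<forall>\<^sub>F t in nhds 0. \<bar>f t\<bar> \<le> \<epsilon> * \<bar>t\<bar>"
  shows "(f has_real_derivative 0) (at 0)"
  unfolding has_field_derivative_iff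
proof (rule tendstoI)
  fix \<epsilon> :: real assume "\<epsilon> > 0"
  have "\<forall>\<^sub>F t in at 0. \<bar>f t\<bar> \<le> \<epsilon>/2 * \<bar>t\<bar> \<and> t \<noteq> 0"
    using small[of "\<epsilon>/2"] \<open>\<epsilon> > 0\<close> unfolding eventually_at_filter
    by (auto elim: eventually_mono)
  then show "\<forall>\<^sub>F t in at 0. dist ((f t - f 0) / (t - 0)) 0 < \<epsilon>"
  proof eventually_elim
    case (elim t)
    have "\<epsilon>/2 * \<bar>t\<bar> < \<epsilon> * \<bar>t\<bar>"
      using \<open>\<epsilon> > 0\<close> elim by simp
    with elim have "\<bar>f t\<bar> < \<epsilon> * \<bar>t\<bar>"
      by linarith
    with elim show ?case
      by (simp add: \<open>f 0 = 0\<close> dist_real_def divide_less_eq)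
  qed
qed

lemma radial_linearization:
  fixes \<rho> :: "'a::real_normed_vector \<Rightarrow> real"
  assumes deriv: "(\<rho> has_derivative \<rho>') (at x)" and "\<rho> x = 0" "\<rho>' w = 0" "\<eta> > 0"
  shows "\<forall>\<^sub>F t in nhds 0. \<forall>s. \<bar>s\<bar> \<le> \<bar>t\<bar> \<longrightarrow> \<bar>\<rho> ((1 + s) *\<^sub>R (x + t *\<^sub>R w)) - s * \<rho>' x\<bar> \<le> \<eta> * \<bar>t\<bar>"
proof -
  define C where "C = norm x + 2 * norm w + 1"
  have "C > 0"
    by (simp add: C_def add_nonneg_pos)
  have lin: "linear \<rho>'"
    using deriv by (rule has_derivative_linear)
  from deriv \<open>\<eta> > 0\<close> \<open>C > 0\<close> obtain d where "d > 0"
    and d: "\<forall>y. norm (y - x) < d \<longrightarrow> norm (\<rho> y - \<rho> x - \<rho>' (y - x)) \<le> \<eta> / C * norm (y - x)"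
    unfolding has_derivative_at_alt by (meson divide_pos_pos)
  have "\<forall>\<^sub>F t in nhds 0. \<bar>t\<bar> < min (d / C) 1"
    using \<open>d > 0\<close> \<open>C > 0\<close> unfolding eventually_nhds_metric dist_real_def
    by (intro exI[of _ "min (d / C) 1"]) auto
  then show ?thesis
  proof (eventually_elim, intro allI impI)
    fix t s :: real assume t: "\<bar>t\<bar> < min (d / C) 1" and "\<bar>s\<bar> \<le> \<bar>t\<bar>"
    define y where "y = (1 + s) *\<^sub>R (x + t *\<^sub>R w)"
    have yx: "y - x = s *\<^sub>R x + ((1 + s) * t) *\<^sub>R w"
      by (simp add: y_def algebra_simps)
    have "\<bar>1 + s\<bar> \<le> 2"
      using t \<open>\<bar>s\<bar> \<le> \<bar>t\<bar>\<close> by linarith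
    have "norm (y - x) \<le> \<bar>s\<bar> * norm x + \<bar>1 + s\<bar> * \<bar>t\<bar> * norm w"
      using norm_triangle_ineq[of "s *\<^sub>R x" "((1 + s) * t) *\<^sub>R w"] by (simp add: yx abs_mult)
    also have "\<dots> \<le> \<bar>t\<bar> * norm x + (2 * \<bar>t\<bar>) * norm w"
      using \<open>\<bar>s\<bar> \<le> \<bar>t\<bar>\<close> \<open>\<bar>1 + s\<bar> \<le> 2\<close> by (intro add_mono mult_right_mono) auto
    also have "\<dots> \<le> C * \<bar>t\<bar>"
      by (simp add: C_def algebra_simps)
    finally have ny: "norm (y - x) \<le> C * \<bar>t\<bar>" .
    moreover have "C * \<bar>t\<bar> < d"
      using t \<open>C > 0\<close> by (simp add: pos_less_divide_eq mult.commute)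
    moreover have "\<rho>' (y - x) = s * \<rho>' x"
      by (simp add: yx linear_add[OF lin] linear_scale[OF lin] \<open>\<rho>' w = 0\<close>)
    ultimately have "\<bar>\<rho> y - s * \<rho>' x\<bar> \<le> \<eta> / C * norm (y - x)"
      using d \<open>\<rho> x = 0\<close> by (metis diff_zero le_less_trans real_norm_def)
    also have "\<dots> \<le> \<eta> / C * (C * \<bar>t\<bar>)"
      using ny \<open>\<eta> > 0\<close> \<open>C > 0\<close> by (intro mult_left_mono) auto
    also have "\<dots> = \<eta> * \<bar>t\<bar>"
      using \<open>C > 0\<close> by simp
    finally show "\<bar>\<rho> ((1 + s) *\<^sub>R (x + t *\<^sub>R w)) - s * \<rho>' x\<bar> \<le> \<eta> * \<bar>t\<bar>"
      unfolding y_def .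
  qed
qed

lemma radial_level_crossing:
  fixes \<rho> :: "'a::real_normed_vector \<Rightarrow> real"
  assumes deriv: "(\<rho> has_derivative \<rho>') (at x)" and cont: "continuous_on UNIV \<rho>"
    and "\<rho> x = 0" "\<rho>' w = 0" "\<rho>' x > 0" "\<epsilon> > 0"
  shows "\<forall>\<^sub>F t in nhds 0. \<exists>s. \<bar>s\<bar> \<le> \<epsilon> * \<bar>t\<bar> \<and> \<rho> ((1 + s) *\<^sub>R (x + t *\<^sub>R w)) = 0"
proof -
  define e where "e = min \<epsilon> 1"
  have "e > 0" "e \<le> \<epsilon>" "e \<le> 1"
    using \<open>\<epsilon> > 0\<close> by (auto simp: e_def)
  have "\<forall>\<^sub>F t in nhds 0. \<forall>s. \<bar>s\<bar> \<le> \<bar>t\<bar> \<longrightarrow>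
      \<bar>\<rho> ((1 + s) *\<^sub>R (x + t *\<^sub>R w)) - s * \<rho>' x\<bar> \<le> e * \<rho>' x * \<bar>t\<bar>"
    using \<open>e > 0\<close> \<open>\<rho>' x > 0\<close> by (intro radial_linearization[OF deriv \<open>\<rho> x = 0\<close> \<open>\<rho>' w = 0\<close>]) simp
  then show ?thesis
  proof eventually_elim
    case (elim t)
    let ?f = "\<lambda>s. \<rho> ((1 + s) *\<^sub>R (x + t *\<^sub>R w))"
    have "e * \<bar>t\<bar> \<le> \<bar>t\<bar>"
      using \<open>e \<le> 1\<close> \<open>e > 0\<close> by (intro mult_left_le_one_le) auto
    then have "\<bar>?f (- (e * \<bar>t\<bar>)) + e * \<bar>t\<bar> * \<rho>' x\<bar> \<le> e * \<bar>t\<bar> * \<rho>' x"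
      "\<bar>?f (e * \<bar>t\<bar>) - e * \<bar>t\<bar> * \<rho>' x\<bar> \<le> e * \<bar>t\<bar> * \<rho>' x"
      using elim[rule_format, of "- (e * \<bar>t\<bar>)"] elim[rule_format, of "e * \<bar>t\<bar>"] \<open>e > 0\<close>
      by (simp_all add: abs_mult ac_simps)
    then have "?f (- (e * \<bar>t\<bar>)) \<le> 0" "0 \<le> ?f (e * \<bar>t\<bar>)"
      by (simp_all add: abs_le_iff)
    moreover have "continuous_on {- (e * \<bar>t\<bar>) .. e * \<bar>t\<bar>} ?f"
      by (intro continuous_on_compose2[OF cont] continuous_intros) auto
    ultimately obtain s where "\<bar>s\<bar> \<le> e * \<bar>t\<bar>" "?f s = 0"
      using IVT'[of ?f "- (e * \<bar>t\<bar>)" 0 "e * \<bar>t\<bar>"] \<open>e > 0\<close> by force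
    then show ?case
      using \<open>e \<le> \<epsilon>\<close> by (meson abs_ge_zero mult_right_mono order_trans)
  qed
qed

locale convex_defining_function =
  fixes \<rho> :: "'a::euclidean_space \<Rightarrow> real" and \<rho>' :: "'a \<Rightarrow> 'a \<Rightarrow> real" and M :: "'a set"
  assumes has_derivative: "\<And>x. (\<rho> has_derivative \<rho>' x) (at x)"
    and level_set: "M = {x. \<rho> x = 0}"
    and regular: "\<And>x. x \<in> M \<Longrightarrow> \<exists>v. \<rho>' x v \<noteq> 0"
    and convex_sublevel: "convex {x. \<rho> x \<le> 0}"
    and zero_in_interior: "0 \<in> interior {x. \<rho> x \<le> 0}"
begin

lemma linear_derivative: "linear (\<rho>' x)"
  using has_derivative by (rule has_derivative_linear)

lemma continuous: "continuous_on UNIV \<rho>"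
  using has_derivative by (meson continuous_at_imp_continuous_on has_derivative_continuous)

lemma supporting_halfspace:
  assumes "y \<in> M" "\<rho> z \<le> 0"
  shows "\<rho>' y z \<le> \<rho>' y y"
proof (rule ccontr)
  assume "\<not> ?thesis"
  then have "\<rho>' y (z - y) > 0"
    by (simp add: linear_diff[OF linear_derivative])
  moreover have "((\<lambda>\<tau>. y + \<tau> *\<^sub>R (z - y)) has_vector_derivative z - y) (at 0)"
    unfolding has_vector_derivative_def by (auto intro!: derivative_eq_intros)
  then have "((\<lambda>\<tau>. \<rho> (y + \<tau> *\<^sub>R (z - y))) has_real_derivative \<rho>' y (z - y)) (at 0)"
    using vector_derivative_diff_chain_within[of _ "z - y" 0 UNIV \<rho> "\<rho>' y"]
      has_derivative_at_withinI[OF has_derivative]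
    by (simp add: o_def has_real_derivative_iff_has_vector_derivative)
  ultimately obtain d where "d > 0" and d: "\<And>h. 0 < h \<Longrightarrow> h < d \<Longrightarrow> \<rho> y < \<rho> (y + h *\<^sub>R (z - y))"
    using DERIV_pos_inc_right by fastforce
  define h where "h = min (d / 2) 1"
  have "0 < h" "h < d" "h \<le> 1"
    using \<open>d > 0\<close> by (auto simp: h_def)
  have "(1 - h) *\<^sub>R y + h *\<^sub>R z \<in> {x. \<rho> x \<le> 0}"
    using \<open>0 < h\<close> \<open>h \<le> 1\<close> assms level_set by (intro convexD[OF convex_sublevel]) auto
  moreover have "(1 - h) *\<^sub>R y + h *\<^sub>R z = y + h *\<^sub>R (z - y)"
    by (simp add: algebra_simps)
  ultimately show False
    using d[OF \<open>0 < h\<close> \<open>h < d\<close>] assms(1) level_set by simp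
qed

lemma radial_derivative_pos:
  assumes "y \<in> M"
  shows "\<rho>' y y > 0"
proof -
  obtain e where "e > 0" and ball: "ball 0 e \<subseteq> {x. \<rho> x \<le> 0}"
    using zero_in_interior mem_interior by blast
  obtain v where v: "\<rho>' y v \<noteq> 0"
    using regular[OF assms] by blast
  then have "v \<noteq> 0"
    using linear_0[OF linear_derivative] by auto
  define z where "z = (e / (2 * norm v) * sgn (\<rho>' y v)) *\<^sub>R v"
  have "norm z < e"
    using \<open>v \<noteq> 0\<close> \<open>e > 0\<close> v by (simp add: z_def abs_mult)
  then have "\<rho> z \<le> 0"
    using ball by auto
  moreover have "\<rho>' y z = e / (2 * norm v) * \<bar>\<rho>' y v\<bar>"
    by (simp add: z_def linear_scale[OF linear_derivative] abs_sgn)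
  then have "\<rho>' y z > 0"
    using \<open>v \<noteq> 0\<close> \<open>e > 0\<close> v by simp
  ultimately show ?thesis
    using supporting_halfspace[OF assms] by fastforce
qed

lemma radial_unique:
  assumes "y \<in> M" "\<mu> > 0" "\<mu> *\<^sub>R y \<in> M"
  shows "\<mu> = 1"
proof -
  have "\<rho> y \<le> 0" "\<rho> (\<mu> *\<^sub>R y) \<le> 0"
    using assms level_set by auto
  then have "\<mu> * \<rho>' y y \<le> \<rho>' y y" "\<rho>' (\<mu> *\<^sub>R y) y \<le> \<mu> * \<rho>' (\<mu> *\<^sub>R y) y"
    using supporting_halfspace[OF assms(1) \<open>\<rho> (\<mu> *\<^sub>R y) \<le> 0\<close>]
      supporting_halfspace[OF assms(3) \<open>\<rho> y \<le> 0\<close>]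
    by (simp_all add: linear_scale[OF linear_derivative])
  moreover have "\<rho>' y y > 0" "\<mu> * \<rho>' (\<mu> *\<^sub>R y) y > 0"
    using radial_derivative_pos[OF assms(1)] radial_derivative_pos[OF assms(3)]
    by (simp_all add: linear_scale[OF linear_derivative])
  ultimately have "\<mu> \<le> 1" "1 \<le> \<mu>"
    using \<open>\<mu> > 0\<close> by (simp_all add: mult_le_cancel_right2 mult_le_cancel_right1 zero_less_mult_iff)
  then show ?thesis
    by simp
qed

lemma radial_projection_near_line:
  assumes "x \<in> M" "\<rho>' x w = 0" "\<epsilon> > 0"
  shows "\<forall>\<^sub>F t in nhds 0. \<exists>s. \<bar>s\<bar> \<le> \<epsilon> * \<bar>t\<bar> \<and> s > -1 \<and> (1 + s) *\<^sub>R (x + t *\<^sub>R w) \<in> M"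
proof -
  have "\<forall>\<^sub>F t in nhds 0. \<exists>s. \<bar>s\<bar> \<le> min \<epsilon> 1 * \<bar>t\<bar> \<and> \<rho> ((1 + s) *\<^sub>R (x + t *\<^sub>R w)) = 0"
    using assms level_set
    by (intro radial_level_crossing[OF has_derivative continuous _ _ radial_derivative_pos]) auto
  moreover have "\<forall>\<^sub>F t in nhds 0. \<bar>t :: real\<bar> < 1"
    unfolding eventually_nhds_metric dist_real_def by (intro exI[of _ 1]) auto
  ultimately show ?thesis
  proof eventually_elim
    case (elim t)
    then obtain s where s: "\<bar>s\<bar> \<le> min \<epsilon> 1 * \<bar>t\<bar>" "\<rho> ((1 + s) *\<^sub>R (x + t *\<^sub>R w)) = 0"
      by blast
    have "min \<epsilon> 1 * \<bar>t\<bar> \<le> \<epsilon> * \<bar>t\<bar>" "min \<epsilon> 1 * \<bar>t\<bar> \<le> 1 * \<bar>t\<bar>"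
      by (intro mult_right_mono; simp)+
    with s elim have "s > -1"
      by (auto simp: abs_le_iff)
    with s \<open>min \<epsilon> 1 * \<bar>t\<bar> \<le> \<epsilon> * \<bar>t\<bar>\<close> level_set show ?case
      by (intro exI[of _ s]) auto
  qed
qed

lemma kernel_subset_tangent_space:
  assumes "x \<in> M" "\<rho>' x w = 0"
  shows "w \<in> tangent_space M x"
proof -
  define c where "c t = x + t *\<^sub>R w" for t
  \<comment> \<open>the curve is the radial projection of the line c onto M\<close>
  define \<sigma> where "\<sigma> t = (THE s. s > -1 \<and> (1 + s) *\<^sub>R c t \<in> M)" for t
  have \<sigma>_eqI: "\<sigma> t = s" if "s > -1" "(1 + s) *\<^sub>R c t \<in> M" for s t
    unfolding \<sigma>_def
  proof (rule the_equality)
    fix s' assume s': "s' > -1 \<and> (1 + s') *\<^sub>R c t \<in> M"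
    then have "((1 + s') / (1 + s)) *\<^sub>R ((1 + s) *\<^sub>R c t) \<in> M"
      using that(1) by simp
    moreover have "(1 + s') / (1 + s) > 0"
      using that(1) s' by simp
    ultimately have "(1 + s') / (1 + s) = 1"
      using radial_unique[OF that(2)] by blast
    then show "s' = s"
      using that(1) by (simp add: field_simps)
  qed (use that in simp)
  have small: "\<forall>\<^sub>F t in nhds 0. \<bar>\<sigma> t\<bar> \<le> \<epsilon> * \<bar>t\<bar> \<and> (1 + \<sigma> t) *\<^sub>R c t \<in> M" if "\<epsilon> > 0" for \<epsilon>
    using radial_projection_near_line[OF assms that]
    by eventually_elim (auto simp: c_def \<sigma>_eqI)
  have "\<sigma> 0 = 0"
    using \<sigma>_eqI[of 0 0] assms(1) by (simp add: c_def)
  then have "(\<sigma> has_real_derivative 0) (at 0)"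
    using small by (intro has_real_derivative_0_if_little_o) (blast intro: eventually_mono)+
  then have "((\<lambda>t. (1 + \<sigma> t) *\<^sub>R c t) has_vector_derivative w) (at 0)"
    using has_vector_derivative_scaleR[of "\<lambda>t. 1 + \<sigma> t" 0 0 UNIV c w] \<open>\<sigma> 0 = 0\<close>
    by (auto simp: c_def intro!: derivative_eq_intros)
  moreover have "(1 + \<sigma> 0) *\<^sub>R c 0 = x"
    using \<open>\<sigma> 0 = 0\<close> by (simp add: c_def)
  ultimately show ?thesis
    unfolding tangent_space_def using small[of 1] by (auto elim: eventually_mono)
qed

lemma tangent_space_eq_kernel:
  assumes "x \<in> M"
  shows "tangent_space M x = {v. \<rho>' x v = 0}"
proof
  show "tangent_space M x \<subseteq> {v. \<rho>' x v = 0}"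
    using tangent_space_derivative_eq_0_at_max[OF has_derivative[of x], where S = M] assms level_set by auto
qed (use kernel_subset_tangent_space assms in blast)

end

lemma linear_image_kernel_eq_kernel:
  fixes f g :: "'a::euclidean_space \<Rightarrow> real"
  assumes "linear L" "linear f" "f p \<noteq> 0" "linear g" "g q \<noteq> 0"
    and inj: "inj_on L {v. f v = 0}" and into: "L ` {v. f v = 0} \<subseteq> {u. g u = 0}"
  shows "L ` {v. f v = 0} = {u. g u = 0}"
proof -
  have sub: "subspace {v. f v = 0}" "subspace {u. g u = 0}"
    using assms(2,4) by (simp_all add: linear_subspace_kernel)
  have "dim (L ` {v. f v = 0}) = dim {v. f v = 0}"
    using inj by (intro dim_image_eq[OF assms(1)]) (simp add: span_eq_iff[THEN iffD2, OF sub(1)])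
  also have "\<dots> = dim {u. g u = 0}"
    using dim_kernel_functional assms(2-5) by metis
  finally show ?thesis
    using sub by (intro subspace_dim_equal linear_subspace_image[OF assms(1)] into) simp_all
qed

locale quadratically_convex_in_symplectic = convex_defining_function \<rho> \<rho>' M
  for \<rho> :: "'a::euclidean_space \<Rightarrow> real" and \<rho>' M +
  fixes \<rho>'' :: "'a \<Rightarrow> 'a \<Rightarrow> 'a \<Rightarrow> real" and \<omega> :: "'a \<Rightarrow> 'a \<Rightarrow> real" and J :: "'a \<Rightarrow> 'a"
  assumes has_second_derivative: "\<And>x v. ((\<lambda>y. \<rho>' y v) has_derivative (\<lambda>h. \<rho>'' x h v)) (at x)"
    and hessian_pos: "\<And>x w. x \<in> M \<Longrightarrow> \<rho>' x w = 0 \<Longrightarrow> w \<noteq> 0 \<Longrightarrow> \<rho>'' x w w > 0"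
    and symplectic: "symplectic_form \<omega>"
    and linear_J: "linear J" and omega_J: "\<And>v g. \<omega> v (J g) = v \<bullet> g"
begin

lemma linear_second_derivative: "linear (\<rho>'' x h)"
proof -
  have expand: "(\<Sum>b\<in>Basis. (v \<bullet> b) * \<rho>' y b) = \<rho>' y v" for y v
    using inner_riesz_vector[OF linear_derivative, of v y]
    by (simp add: riesz_vector_def inner_sum_right mult.commute)
  have "((\<lambda>y. \<Sum>b\<in>Basis. (v \<bullet> b) * \<rho>' y b) has_derivative (\<lambda>h. \<Sum>b\<in>Basis. (v \<bullet> b) * \<rho>'' x h b)) (at x)" for v
    by (intro has_derivative_sum has_derivative_mult_right has_second_derivative)
  then have unique: "(\<lambda>h. \<rho>'' x h v) = (\<lambda>h. \<Sum>b\<in>Basis. (v \<bullet> b) * \<rho>'' x h b)" for v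
    unfolding expand by (rule has_derivative_unique[OF has_second_derivative])
  have "\<rho>'' x h v = v \<bullet> riesz_vector (\<rho>'' x h)" for v
    using fun_cong[OF unique[of v], of h] by (simp add: riesz_vector_def inner_sum_right mult.commute)
  then have "\<rho>'' x h = (\<lambda>v. v \<bullet> riesz_vector (\<rho>'' x h))"
    by (rule ext)
  then show ?thesis
    by (metis bounded_linear.linear bounded_linear_inner_left)
qed

definition reeb_map :: "'a \<Rightarrow> 'a" where
  "reeb_map y = inverse (\<rho>' y y) *\<^sub>R J (riesz_vector (\<rho>' y))"

lemma omega_reeb_map: "\<omega> v (reeb_map y) = \<rho>' y v / \<rho>' y y"
  using symplectic_form_bilinear[OF symplectic]
  by (simp add: reeb_map_def bilinear_rmul omega_J inner_riesz_vector[OF linear_derivative]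
      divide_inverse mult.commute)

lemma reeb_eq_reeb_map:
  assumes "x \<in> M"
  shows "reeb \<omega> M x = reeb_map x"
proof (rule reeb_eqI[OF symplectic linear_derivative])
  show "\<rho>' x x \<noteq> 0" "\<omega> x (reeb_map x) = 1"
    using radial_derivative_pos[OF assms] by (simp_all add: omega_reeb_map)
  show "{v. \<rho>' x v = 0} \<subseteq> tangent_space M x"
    using tangent_space_eq_kernel[OF assms] by simp
  show "\<omega> v (reeb_map x) = 0" if "v \<in> tangent_space M x" for v
    using that by (simp add: tangent_space_eq_kernel[OF assms] omega_reeb_map)
qed

lemma omega_reeb_map_le:
  assumes "x \<in> M" "y \<in> M"
  shows "\<omega> x (reeb_map y) \<le> \<omega> x (reeb_map x)"
proof -
  have "\<rho>' y x \<le> \<rho>' y y"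
    using supporting_halfspace[OF assms(2)] assms(1) level_set by simp
  then show ?thesis
    using radial_derivative_pos[OF assms(1)] radial_derivative_pos[OF assms(2)]
    by (simp add: omega_reeb_map)
qed

lemma riesz_vector_derivative_has_derivative:
  "((\<lambda>y. riesz_vector (\<rho>' y)) has_derivative (\<lambda>h. riesz_vector (\<rho>'' x h))) (at x)"
  unfolding riesz_vector_def by (intro has_derivative_sum has_derivative_scaleR_left has_second_derivative)

lemma radial_derivative_has_derivative:
  "((\<lambda>y. \<rho>' y y) has_derivative (\<lambda>h. \<rho>'' x h x + \<rho>' x h)) (at x)"
proof -
  have "((\<lambda>y. y \<bullet> riesz_vector (\<rho>' y)) has_derivative
      (\<lambda>h. x \<bullet> riesz_vector (\<rho>'' x h) + h \<bullet> riesz_vector (\<rho>' x))) (at x)"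
    by (intro has_derivative_inner has_derivative_ident riesz_vector_derivative_has_derivative)
  then show ?thesis
    by (simp add: inner_riesz_vector linear_derivative linear_second_derivative)
qed

lemma reeb_map_has_derivative:
  assumes "x \<in> M"
  obtains L where "(reeb_map has_derivative L) (at x)"
    and "\<And>w. \<rho>' x w = 0 \<Longrightarrow> \<omega> w (L w) = \<rho>'' x w w / \<rho>' x x"
proof -
  have "\<rho>' x x \<noteq> 0"
    using radial_derivative_pos[OF assms] by simp
  have bil: "bilinear \<omega>"
    using symplectic_form_bilinear[OF symplectic] .
  let ?L = "\<lambda>h. inverse (\<rho>' x x) *\<^sub>R J (riesz_vector (\<rho>'' x h))
    + (- (inverse (\<rho>' x x) * (\<rho>'' x h x + \<rho>' x h) * inverse (\<rho>' x x))) *\<^sub>R J (riesz_vector (\<rho>' x))"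
  have "bounded_linear J"
    using linear_J linear_conv_bounded_linear by blast
  have "(reeb_map has_derivative ?L) (at x)"
    unfolding reeb_map_def[abs_def]
    by (intro has_derivative_scaleR Deriv.has_derivative_inverse radial_derivative_has_derivative
        \<open>\<rho>' x x \<noteq> 0\<close> bounded_linear.has_derivative[OF \<open>bounded_linear J\<close>]
        riesz_vector_derivative_has_derivative)
  moreover have "\<omega> w (?L w) = \<rho>'' x w w / \<rho>' x x" if "\<rho>' x w = 0" for w
    using that
    by (simp only: bilinear_radd[OF bil] bilinear_rmul[OF bil] omega_J
        inner_riesz_vector[OF linear_derivative] inner_riesz_vector[OF linear_second_derivative])
      (simp add: divide_inverse)
  ultimately show thesis
    by (rule that)
qed

lemma tangent_space_polar_subset:
  assumes "x \<in> M"
  shows "tangent_space (reeb_map ` M) (reeb_map x) \<subseteq> {u. \<omega> x u = 0}"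
proof
  fix u assume u: "u \<in> tangent_space (reeb_map ` M) (reeb_map x)"
  have "linear (\<omega> x)"
    using symplectic_form_bilinear[OF symplectic] by (simp add: bilinear_def)
  moreover have "\<omega> x y \<le> \<omega> x (reeb_map x)" if "y \<in> reeb_map ` M" for y
    using that omega_reeb_map_le[OF assms] by (auto simp only: image_iff)
  ultimately show "u \<in> {u. \<omega> x u = 0}"
    using tangent_space_derivative_eq_0_at_max[OF linear_imp_has_derivative _ u] by simp
qed

lemma tangent_space_polar:
  assumes "x \<in> M"
  shows "tangent_space (reeb_map ` M) (reeb_map x) = {u. \<omega> x u = 0}"
proof
  show into: "tangent_space (reeb_map ` M) (reeb_map x) \<subseteq> {u. \<omega> x u = 0}"
    by (rule tangent_space_polar_subset[OF assms])
  have bil: "bilinear \<omega>"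
    using symplectic_form_bilinear[OF symplectic] .
  then have "linear (\<omega> x)"
    by (simp add: bilinear_def)
  obtain L where L: "(reeb_map has_derivative L) (at x)"
    and omega_L: "\<And>w. \<rho>' x w = 0 \<Longrightarrow> \<omega> w (L w) = \<rho>'' x w w / \<rho>' x x"
    using reeb_map_has_derivative[OF assms] by blast
  have "linear L"
    using L by (rule has_derivative_linear)
  have tangent: "L ` {w. \<rho>' x w = 0} \<subseteq> tangent_space (reeb_map ` M) (reeb_map x)"
  proof (rule image_subsetI)
    fix w assume "w \<in> {w. \<rho>' x w = 0}"
    then have "w \<in> tangent_space M x"
      using tangent_space_eq_kernel[OF assms] by simp
    then show "L w \<in> tangent_space (reeb_map ` M) (reeb_map x)"
      by (rule tangent_space_image[OF L])
  qed
  have "inj_on L {w. \<rho>' x w = 0}"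
    unfolding linear_inj_on_iff_eq_0[OF \<open>linear L\<close> linear_subspace_kernel[OF linear_derivative]]
  proof (intro ballI impI)
    fix w assume w: "w \<in> {w. \<rho>' x w = 0}" and "L w = 0"
    then have "\<rho>'' x w w / \<rho>' x x = 0"
      using omega_L[of w] bilinear_rzero[OF bil] by simp
    then have "\<rho>'' x w w = 0"
      using radial_derivative_pos[OF assms] by simp
    then show "w = 0"
      using hessian_pos[OF assms, of w] w by (cases "w = 0") simp_all
  qed
  moreover have "\<omega> x (reeb_map x) \<noteq> 0" "\<rho>' x x \<noteq> 0"
    using radial_derivative_pos[OF assms] by (simp_all add: omega_reeb_map)
  ultimately have "L ` {w. \<rho>' x w = 0} = {u. \<omega> x u = 0}"
    by (intro linear_image_kernel_eq_kernel[OF \<open>linear L\<close> linear_derivative _ \<open>linear (\<omega> x)\<close>]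
        order_trans[OF tangent into])
  then show "{u. \<omega> x u = 0} \<subseteq> tangent_space (reeb_map ` M) (reeb_map x)"
    using tangent by blast
qed

lemma reeb_polar_reeb_map:
  assumes "x \<in> M"
  shows "reeb \<omega> (reeb_map ` M) (reeb_map x) = - x"
proof -
  have bil: "bilinear \<omega>"
    using symplectic_form_bilinear[OF symplectic] .
  have swap: "\<omega> v (- x) = \<omega> x v" for v
    using symplectic_form_antisym[OF symplectic, of x v] bilinear_rneg[OF bil, of v x] by simp
  have "\<omega> x (reeb_map x) = 1"
    using radial_derivative_pos[OF assms] by (simp add: omega_reeb_map)
  then show ?thesis
    using bil by (intro reeb_eqI[OF symplectic, of "\<omega> x"])
      (auto simp: bilinear_def swap tangent_space_polar[OF assms])
qed

end

theorem lemma2p5: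
  fixes \<omega> :: "'a::euclidean_space \<Rightarrow> 'a \<Rightarrow> real" and M :: "'a set"
  assumes "symplectic_form \<omega>" and "qconvex_hypersurface M"
  shows "(\<forall>x\<in>M. reeb \<omega> (symplectic_polar \<omega> M) (reeb \<omega> M x) = - x)
    \<and> symplectic_polar \<omega> (symplectic_polar \<omega> M) = uminus ` M"
proof -
  obtain \<rho> D where smooth: "smooth_derivs \<rho> D" and "M = {x. \<rho> x = 0}"
    and "\<forall>x\<in>M. \<exists>v. D [v] x \<noteq> 0" and "\<forall>x\<in>M. \<forall>v. v \<noteq> 0 \<and> D [v] x = 0 \<longrightarrow> D [v, v] x > 0"
    and "convex {x. \<rho> x \<le> 0}" and "0 \<in> interior {x. \<rho> x \<le> 0}"
    using assms(2) unfolding qconvex_hypersurface_def by blast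
  moreover obtain J where "linear J" "\<And>v g. \<omega> v (J g) = v \<bullet> g"
    using symplectic_form_dual_map[OF assms(1)] by blast
  moreover have "D [] = \<rho>" "\<And>vs x. (D vs has_derivative (\<lambda>v. D (v # vs) x)) (at x)"
    using smooth unfolding smooth_derivs_def by blast+
  ultimately interpret quadratically_convex_in_symplectic \<rho> "\<lambda>x v. D [v] x" M "\<lambda>x h v. D [h, v] x" \<omega> J
    using assms(1) by (intro quadratically_convex_in_symplectic.intro convex_defining_function.intro
        quadratically_convex_in_symplectic_axioms.intro) auto
  have polar: "symplectic_polar \<omega> M = reeb_map ` M"
    unfolding symplectic_polar_def by (rule image_cong) (simp_all add: reeb_eq_reeb_map)
  have "symplectic_polar \<omega> (reeb_map ` M) = uminus ` M"
    unfolding symplectic_polar_def image_image by (rule image_cong) (simp_all add: reeb_polar_reeb_map)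
  then show ?thesis
    by (simp add: polar reeb_eq_reeb_map reeb_polar_reeb_map)
qed

end
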